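(* Let $R$ be a commutative ring in which $2$ is invertible, $I$ an ideal of $R$, and let $(Q,q)$ be a free quadratic space of rank $n=2r$, $r\ge1$, having an ordered basis $e_1,\dots,e_n$ with respect to which the matrix of $\langle\,,\,\rangle$ is $\widetilde{\psi}_r$. Let $M=Q\perp\mathbb{H}(R)$ and identify automorphisms of $M$ with matrices in $\mathrm{GL}_{n+2}(R)$ via the ordered basis $(e_1,\dots,e_n,x,f)$ (with respect to which the form has matrix $\widetilde{\psi}_{r+1}$). Then $\mathrm{EO}_{(R,I)}(Q,\mathbb{H}(R))=\mathrm{EO}_{n+2}(R,I)$.
   Context: A quadratic $R$-module $(Q,q)$ is a finitely generated projective module with quadratic form $q$ and bilinear form $\langle x,y\rangle=q(x+y)-q(x)-q(y)$ (so $\langle x,x\rangle=2q(x)$); a quadratic space if $z\mapsto\langle z,-\rangle$ is an isomorphism $Q\to Q^*$. $\mathbb{H}(R)=R x\oplus Rf$ with $q(ax+bf)=ab$, so $\langle x,f\rangle=1$, $\langle x,x\rangle=\langle f,f\rangle=0$; orthogonal sums carry the sum of forms. $e_{i,j}$ denotes the matrix unit; $\widetilde{\psi}_s=\sum_{i=1}^s(e_{2i-1,2i}+e_{2i,2i-1})$ ($2s\times 2s$). DSER transformations on $Q\perp\mathbb{H}(P)$ ($P$ f.g. projective, $\mathbb{H}(P)=P\oplus P^*$ with $q(y,g)=g(y)$): for $\alpha:Q\to P$ let $\alpha^*:P^*\to Q$ satisfy $\langle\alpha^*(g),z\rangle=g(\alpha(z))$ and $E_\alpha(z,y,g)=(z-\alpha^*(g),y+\alpha(z)-\tfrac12\alpha\alpha^*(g),g)$;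 for $\beta:Q\to P^*$ let $\beta^*:P\to Q$ satisfy $\langle\beta^*(y),z\rangle=\beta(z)(y)$ and $E^*_\beta(z,y,g)=(z-\beta^*(y),y,g+\beta(z)-\tfrac12\beta\beta^*(y))$. $\mathrm{EO}_R(Q,\mathbb{H}(P))$ is generated by all $E_\alpha,E^*_\beta$; $\mathrm{EO}_I(Q,\mathbb{H}(P))$ is generated by those with $\alpha(Q)\subseteq IP$, $\beta(Q)\subseteq IP^*$; $\mathrm{EO}_{(R,I)}(Q,\mathbb{H}(P))$ is the normal closure of $\mathrm{EO}_I(Q,\mathbb{H}(P))$ in $\mathrm{EO}_R(Q,\mathbb{H}(P))$. Even elementary orthogonal group: for $N=2s$, let $\sigma$ be the permutation of $\{1,\dots,N\}$ with $\sigma(2i)=2i-1$, $\sigma(2i-1)=2i$; for $i\neq j$, $i\ne\sigma(j)$ and $z\in R$, $oe_{i,j}(z)=I_N+ze_{i,j}-ze_{\sigma(j),\sigma(i)}$ (orthogonal for $\widetilde{\psi}_s$). $\mathrm{EO}_N(R)$ is generated by all $oe_{i,j}(z)$, $z\in R$; $\mathrm{EO}_N(I)$ by those with $z\in I$; $\mathrm{EO}_N(R,I)$ is the normal closure of $\mathrm{EO}_N(I)$ in $\mathrm{EO}_N(R)$. *)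

theory Defs
  imports "Jordan_Normal_Form.Matrix"
begin

definition is_ideal :: "'a::comm_ring_1 set \<Rightarrow> bool" where
  "is_ideal I \<longleftrightarrow> 0 \<in> I \<and> (\<forall>a\<in>I. \<forall>b\<in>I. a + b \<in> I) \<and> (\<forall>a\<in>I. \<forall>x. x * a \<in> I)"

text \<open>The element 1/2 (meaningful when 2 is invertible).\<close>
definition half :: "'a::comm_ring_1" where
  "half = (SOME h. 2 * h = 1)"

inductive_set gen_grp :: "nat \<Rightarrow> 'a::comm_ring_1 mat set \<Rightarrow> 'a mat set"
  for N :: nat and S :: "'a mat set" where
  one: "1\<^sub>m N \<in> gen_grp N S"
| mult: "A \<in> gen_grp N S \<Longrightarrow> g \<in> S \<Longrightarrow> A * g \<in> gen_grp N S"
| mult_inv: "A \<in> gen_grp N S \<Longrightarrow> g \<in> S \<Longrightarrow> h \<in> carrier_mat N N \<Longrightarrow> g * h = 1\<^sub>m N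
     \<Longrightarrow> A * h \<in> gen_grp N S"

definition normal_closure :: "nat \<Rightarrow> 'a::comm_ring_1 mat set \<Rightarrow> 'a mat set \<Rightarrow> 'a mat set" where
  "normal_closure N G H = gen_grp N {g * h * g' | g h g'. g \<in> G \<and> h \<in> H \<and>
      g' \<in> carrier_mat N N \<and> g * g' = 1\<^sub>m N}"

text \<open>Matrix unit e_{i,j}, 1-based indices.\<close>
definition matunit :: "nat \<Rightarrow> nat \<Rightarrow> nat \<Rightarrow> 'a::comm_ring_1 mat" where
  "matunit N i j = mat N N (\<lambda>(a,b). if a = i - 1 \<and> b = j - 1 then 1 else 0)"

definition sigma_perm :: "nat \<Rightarrow> nat" where
  "sigma_perm k = (if even k then k - 1 else k + 1)"

definition oe :: "nat \<Rightarrow> nat \<Rightarrow> nat \<Rightarrow> 'a::comm_ring_1 \<Rightarrow> 'a mat" where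
  "oe N i j z = 1\<^sub>m N + z \<cdot>\<^sub>m matunit N i j - z \<cdot>\<^sub>m matunit N (sigma_perm j) (sigma_perm i)"

definition oe_gens :: "nat \<Rightarrow> 'a::comm_ring_1 set \<Rightarrow> 'a mat set" where
  "oe_gens N J = {oe N i j z | i j z. i \<in> {1..N} \<and> j \<in> {1..N} \<and> i \<noteq> j \<and>
      i \<noteq> sigma_perm j \<and> z \<in> J}"

definition EO_mat :: "nat \<Rightarrow> 'a::comm_ring_1 set \<Rightarrow> 'a mat set" where
  "EO_mat N J = gen_grp N (oe_gens N J)"

definition EO_mat_rel :: "nat \<Rightarrow> 'a::comm_ring_1 set \<Rightarrow> 'a mat set" where
  "EO_mat_rel N I = normal_closure N (EO_mat N UNIV) (EO_mat N I)"

text \<open>psi_s = sum (e_{2i-1,2i} + e_{2i,2i-1}), written with 0-based JNF indices.\<close>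
definition psi_tilde :: "nat \<Rightarrow> 'a::comm_ring_1 mat" where
  "psi_tilde s = mat (2*s) (2*s) (\<lambda>(i,j). if (even i \<and> j = i + 1) \<or> (odd i \<and> i = j + 1) then 1 else 0)"

definition bilQ :: "nat \<Rightarrow> 'a::comm_ring_1 vec \<Rightarrow> 'a vec \<Rightarrow> 'a" where
  "bilQ r w z = w \<bullet> (psi_tilde r *\<^sub>v z)"

text \<open>A linear map Q -> R (resp. Q -> R^* = R) is z |-> a . z.
  Here P = R, and an element g of P^* is identified with g(1).
  Adjoint: adj r a c is the w in Q with <w,z> = c (a . z) for all z
  (this is alpha^*(g) for g = c, and beta^*(y) for y = c).\<close>
definition adjQ :: "nat \<Rightarrow> 'a::comm_ring_1 vec \<Rightarrow> 'a \<Rightarrow> 'a vec" where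
  "adjQ r a c = (THE w. w \<in> carrier_vec (2*r) \<and>
      (\<forall>z\<in>carrier_vec (2*r). bilQ r w z = c * (a \<bullet> z)))"

text \<open>Vectors of M = Q + H(R) in coordinates (z, y, g) w.r.t. (e_1..e_n, x, f).\<close>
definition E_alpha :: "nat \<Rightarrow> 'a::comm_ring_1 vec \<Rightarrow> 'a vec \<Rightarrow> 'a vec" where
  "E_alpha r a v = (let n = 2*r; z = vec_first v n; y = v $ n; g = v $ (n+1);
      w = adjQ r a g in
      vec (n+2) (\<lambda>i. if i < n then z $ i - w $ i
                     else if i = n then y + a \<bullet> z - half * (a \<bullet> w)
                     else g))"

definition E_beta :: "nat \<Rightarrow> 'a::comm_ring_1 vec \<Rightarrow> 'a vec \<Rightarrow> 'a vec" where
  "E_beta r b v = (let n = 2*r; z = vec_first v n; y = v $ n; g = v $ (n+1);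
      w = adjQ r b y in
      vec (n+2) (\<lambda>i. if i < n then z $ i - w $ i
                     else if i = n then y
                     else g + b \<bullet> z - half * (b \<bullet> w)))"

definition mat_of_map :: "nat \<Rightarrow> ('a::comm_ring_1 vec \<Rightarrow> 'a vec) \<Rightarrow> 'a mat" where
  "mat_of_map N T = mat N N (\<lambda>(i,j). T (unit_vec N j) $ i)"

definition DSER_gens :: "nat \<Rightarrow> 'a::comm_ring_1 set \<Rightarrow> 'a mat set" where
  "DSER_gens r J =
     {mat_of_map (2*r+2) (E_alpha r a) | a. a \<in> carrier_vec (2*r) \<and> (\<forall>z\<in>carrier_vec (2*r). a \<bullet> z \<in> J)}
   \<union> {mat_of_map (2*r+2) (E_beta r b) | b. b \<in> carrier_vec (2*r) \<and> (\<forall>z\<in>carrier_vec (2*r). b \<bullet> z \<in> J)}"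

definition EO_DSER :: "nat \<Rightarrow> 'a::comm_ring_1 set \<Rightarrow> 'a mat set" where
  "EO_DSER r J = gen_grp (2*r+2) (DSER_gens r J)"

definition EO_DSER_rel :: "nat \<Rightarrow> 'a::comm_ring_1 set \<Rightarrow> 'a mat set" where
  "EO_DSER_rel r I = normal_closure (2*r+2) (EO_DSER r UNIV) (EO_DSER r I)"

end

theory Submission
  imports Defs "HOL-Algebra.Generated_Groups"
begin

(* Both groups are normal closures inside GL_{n+2}(R), so it suffices to compare generators.
   In the basis (e_1, ..., e_n, x, f) the matrix of E_alpha depends additively on the row
   vector a of alpha (this is where 1/2 is needed), and for a = c e_k it is the elementary
   generator oe_{n+1,k+1}(c); likewise for E_beta and oe_{n+2,k+1}(c). Hence every DSER
   generator with coefficients in an ideal J is a product of elementary generators with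
   parameters in J. Conversely, an elementary generator involving the index n+1 or n+2 is,
   after oe_{i,j}(z) = oe_{sigma j,sigma i}(-z), a DSER generator, and for i, j <= n the
   commutator formula oe_{i,j}(z) = [oe_{i,n+1}(z), oe_{n+1,j}(1)] writes oe_{i,j}(z) as a DSER
   generator with parameter z times a conjugate of another one by an element of
   EO_R(Q, H(R)). So the absolute groups coincide, and each relative group lies in the normal
   closure of the other. *)

section \<open>Normal closures in a group\<close>

context group
begin

definition conj_closure :: "'a set \<Rightarrow> 'a set \<Rightarrow> 'a set" where
  "conj_closure E H = generate G {g \<otimes> h \<otimes> inv g | g h. g \<in> E \<and> h \<in> H}"

lemma conj_closure_subgroup:
  assumes "E \<subseteq> carrier G" "H \<subseteq> carrier G"
  shows "subgroup (conj_closure E H) G"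
  unfolding conj_closure_def using assms by (intro generate_is_subgroup) blast

lemma conj_mem_conj_closure: "g \<in> E \<Longrightarrow> h \<in> H \<Longrightarrow> g \<otimes> h \<otimes> inv g \<in> conj_closure E H"
  unfolding conj_closure_def by (intro generate.incl) blast

lemma subset_conj_closure:
  assumes "\<one> \<in> E" "H \<subseteq> carrier G"
  shows "H \<subseteq> conj_closure E H"
proof
  fix h assume h: "h \<in> H"
  then have "\<one> \<otimes> h \<otimes> inv \<one> \<in> conj_closure E H"
    using assms(1) by (rule_tac conj_mem_conj_closure)
  then show "h \<in> conj_closure E H"
    using h assms(2) by auto
qed

lemma conj_closure_conj_closed:
  assumes E: "subgroup E G" and H: "H \<subseteq> carrier G" and x: "x \<in> E"
    and y: "y \<in> conj_closure E H"
  shows "x \<otimes> y \<otimes> inv x \<in> conj_closure E H"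
proof -
  let ?C = "{g \<otimes> h \<otimes> inv g | g h. g \<in> E \<and> h \<in> H}"
  have EG: "E \<subseteq> carrier G" by (rule subgroup.subset[OF E])
  have xc: "x \<in> carrier G" using EG x by blast
  have C: "?C \<subseteq> carrier G" using EG H by auto
  have conj_C: "x \<otimes> c \<otimes> inv x \<in> ?C" if cC: "c \<in> ?C" for c
  proof -
    obtain g h where c: "c = g \<otimes> h \<otimes> inv g" and g: "g \<in> E" and h: "h \<in> H"
      using cC by blast
    have gc: "g \<in> carrier G" and hc: "h \<in> carrier G" using EG g H h by blast+
    have "x \<otimes> c \<otimes> inv x = (x \<otimes> g) \<otimes> h \<otimes> inv (x \<otimes> g)"
      by (simp add: c m_assoc inv_mult_group xc gc hc)
    moreover have "x \<otimes> g \<in> E" by (rule subgroup.m_closed[OF E x g])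
    ultimately show ?thesis using h by blast
  qed
  from y[unfolded conj_closure_def] show ?thesis
    unfolding conj_closure_def
  proof induction
    case one
    then show ?case using xc by (simp add: generate.one)
  next
    case (incl c)
    then show ?case using conj_C by (blast intro: generate.incl)
  next
    case (inv c)
    have cc: "c \<in> carrier G" using inv C by blast
    have "x \<otimes> inv c \<otimes> inv x = inv (x \<otimes> c \<otimes> inv x)"
      by (simp add: m_assoc inv_mult_group xc cc)
    then show ?case using generate.inv[OF conj_C[OF inv]] by simp
  next
    case (eng a b)
    have "a \<in> carrier G" "b \<in> carrier G"
      using eng.hyps generate_in_carrier[OF C] by blast+
    then have "x \<otimes> (a \<otimes> b) \<otimes> inv x = (x \<otimes> a \<otimes> inv x) \<otimes> (x \<otimes> b \<otimes> inv x)"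
      by (simp add: m_assoc xc) (simp add: m_assoc[symmetric] xc)
    then show ?case using generate.eng[OF eng.IH] by simp
  qed
qed

lemma conj_closure_least:
  assumes "subgroup K G" "H \<subseteq> K" "\<And>x y. x \<in> E \<Longrightarrow> y \<in> K \<Longrightarrow> x \<otimes> y \<otimes> inv x \<in> K"
  shows "conj_closure E H \<subseteq> K"
  unfolding conj_closure_def using assms by (intro generate_subgroup_incl) blast+

lemma conj_closure_eqI:
  assumes E: "subgroup E G" and X: "X \<subseteq> carrier G" and Y: "Y \<subseteq> carrier G"
    and XY: "X \<subseteq> conj_closure E Y" and YX: "Y \<subseteq> conj_closure E X"
  shows "conj_closure E X = conj_closure E Y"
proof -
  have "E \<subseteq> carrier G" using E subgroup.subset by blast
  then have "subgroup (conj_closure E X) G" "subgroup (conj_closure E Y) G"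
    using X Y by (auto intro: conj_closure_subgroup)
  then show ?thesis
    using XY YX conj_closure_conj_closed[OF E X] conj_closure_conj_closed[OF E Y]
    by (intro equalityI conj_closure_least) auto
qed

lemma conj_closure_self:
  assumes E: "subgroup E G"
  shows "conj_closure E E = E"
proof
  have "x \<otimes> y \<otimes> inv x \<in> E" if "x \<in> E" "y \<in> E" for x y
    using that by (meson E subgroup.m_closed subgroup.m_inv_closed)
  then show "conj_closure E E \<subseteq> E"
    by (rule conj_closure_least[OF E subset_refl])
  show "E \<subseteq> conj_closure E E"
    by (rule subset_conj_closure[OF subgroup.one_closed[OF E] subgroup.subset[OF E]])
qed

lemma vec_additive_mem_subgroup:
  fixes f :: "'r::comm_ring_1 vec \<Rightarrow> 'a"
  assumes K: "subgroup K G"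
    and add: "\<And>a b. a \<in> carrier_vec n \<Longrightarrow> b \<in> carrier_vec n \<Longrightarrow> f (a + b) = f a \<otimes> f b"
    and zero: "f (0\<^sub>v n) = \<one>"
    and unit: "\<And>k. k < n \<Longrightarrow> f (a $ k \<cdot>\<^sub>v unit_vec n k) \<in> K"
    and a: "a \<in> carrier_vec n"
  shows "f a \<in> K"
proof -
  define trunc where "trunc m = vec n (\<lambda>i. if i < m then a $ i else 0)" for m
  have "f (trunc m) \<in> K" if "m \<le> n" for m
    using that
  proof (induction m)
    case 0
    have "trunc 0 = 0\<^sub>v n" by (auto simp: trunc_def)
    then show ?case using zero subgroup.one_closed[OF K] by simp
  next
    case (Suc m)
    have "trunc (Suc m) = trunc m + a $ m \<cdot>\<^sub>v unit_vec n m"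
      using Suc.prems by (intro eq_vecI) (auto simp: trunc_def less_Suc_eq)
    then have "f (trunc (Suc m)) = f (trunc m) \<otimes> f (a $ m \<cdot>\<^sub>v unit_vec n m)"
      by (simp add: add trunc_def)
    then show ?case
      using Suc subgroup.m_closed[OF K] unit by simp
  qed
  moreover have "trunc n = a" using a by (auto simp: trunc_def)
  ultimately show ?thesis by auto
qed

end

definition GL :: "nat \<Rightarrow> 'a::comm_ring_1 mat monoid" where
  "GL N = units_of (ring_mat TYPE('a) N ())"

lemma group_GL: "group (GL N)"
  unfolding GL_def by (rule monoid.units_group[OF ring.is_monoid[OF ring_mat]])

lemma GL_simps [simp]:
  "x \<otimes>\<^bsub>GL N\<^esub> y = x * y"
  "\<one>\<^bsub>GL N\<^esub> = 1\<^sub>m N"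
  by (simp_all add: GL_def units_of_def ring_mat_def)

lemma mem_GL_iff:
  "A \<in> carrier (GL N) \<longleftrightarrow>
     A \<in> carrier_mat N N \<and> (\<exists>B \<in> carrier_mat N N. A * B = 1\<^sub>m N \<and> B * A = 1\<^sub>m N)"
  by (auto simp: GL_def units_of_def ring_mat_def Units_def)

lemma GL_carrier_mat: "A \<in> carrier (GL N) \<Longrightarrow> A \<in> carrier_mat N N"
  by (simp add: mem_GL_iff)

lemma GL_inv_carrier_mat: "A \<in> carrier (GL N) \<Longrightarrow> inv\<^bsub>GL N\<^esub> A \<in> carrier_mat N N"
  by (rule GL_carrier_mat[OF group.inv_closed[OF group_GL]])

lemma GL_r_inv:
  assumes "A \<in> carrier (GL N)"
  shows "A * inv\<^bsub>GL N\<^esub> A = 1\<^sub>m N"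
proof -
  have "A \<otimes>\<^bsub>GL N\<^esub> inv\<^bsub>GL N\<^esub> A = \<one>\<^bsub>GL N\<^esub>"
    by (rule group.r_inv[OF group_GL assms])
  then show ?thesis by simp
qed

lemma GL_inv_eq:
  fixes A B :: "'a::comm_ring_1 mat"
  assumes A: "A \<in> carrier (GL N)" and B: "B \<in> carrier_mat N N" and AB: "A * B = 1\<^sub>m N"
  shows "inv\<^bsub>GL N\<^esub> A = B"
proof -
  interpret GL: group "GL N" by (rule group_GL)
  have A': "inv\<^bsub>GL N\<^esub> A \<in> carrier_mat N N" "A \<in> carrier_mat N N"
    using A by (auto intro: GL_carrier_mat)
  have "B = (inv\<^bsub>GL N\<^esub> A * A) * B"
    using A B GL.l_inv[OF A] by simp
  also have "\<dots> = inv\<^bsub>GL N\<^esub> A * (A * B)"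
    using A' B by (rule assoc_mult_mat)
  finally show ?thesis
    using A' AB by simp
qed

lemma gen_grp_carrier:
  assumes "S \<subseteq> carrier_mat N N" "A \<in> gen_grp N S"
  shows "A \<in> carrier_mat N N"
  using assms(2) by induction (use assms(1) in auto)

lemma gen_grp_mult_closed:
  assumes S: "S \<subseteq> carrier_mat N N" and A: "A \<in> gen_grp N S" and B: "B \<in> gen_grp N S"
  shows "A * B \<in> gen_grp N S"
  using B
proof induction
  case one
  then show ?case using A gen_grp_carrier[OF S A] by simp
next
  case (mult B g)
  have "A * (B * g) = A * B * g"
    using gen_grp_carrier[OF S A] gen_grp_carrier[OF S mult.hyps(1)] mult.hyps(2) S
    by (subst assoc_mult_mat) auto
  then show ?case using mult gen_grp.mult by metis
next
  case (mult_inv B g h)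
  have "A * (B * h) = A * B * h"
    using gen_grp_carrier[OF S A] gen_grp_carrier[OF S mult_inv.hyps(1)] mult_inv.hyps(3)
    by (subst assoc_mult_mat) auto
  then show ?case using mult_inv gen_grp.mult_inv by metis
qed

lemma gen_grp_subset_generate:
  assumes S: "S \<subseteq> carrier (GL N)"
  shows "gen_grp N S \<subseteq> generate (GL N) S"
proof
  fix A assume "A \<in> gen_grp N S"
  then show "A \<in> generate (GL N) S"
  proof induction
    case one
    then show ?case using generate.one[of "GL N" S] by simp
  next
    case (mult A g)
    then show ?case using generate.eng[OF mult.IH generate.incl[OF mult.hyps(2)]] by simp
  next
    case (mult_inv A g h)
    have "h = inv\<^bsub>GL N\<^esub> g"
      using GL_inv_eq mult_inv S by blast
    then show ?case
      using generate.eng[OF mult_inv.IH generate.inv[OF mult_inv.hyps(2)]] by simp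
  qed
qed

lemma generate_subset_gen_grp:
  assumes S: "S \<subseteq> carrier (GL N)"
  shows "generate (GL N) S \<subseteq> gen_grp N S"
proof
  have S': "S \<subseteq> carrier_mat N N" using S GL_carrier_mat by blast
  fix A assume "A \<in> generate (GL N) S"
  then show "A \<in> gen_grp N S"
  proof induction
    case one
    then show ?case by (simp add: gen_grp.one)
  next
    case (incl g)
    have "1\<^sub>m N * g \<in> gen_grp N S"
      by (rule gen_grp.mult[OF gen_grp.one incl])
    moreover have "g \<in> carrier_mat N N"
      using incl S' by blast
    ultimately show ?case
      by simp
  next
    case (inv g)
    have "g \<in> carrier (GL N)" using inv S by blast
    then have "inv\<^bsub>GL N\<^esub> g \<in> carrier_mat N N" "g * inv\<^bsub>GL N\<^esub> g = 1\<^sub>m N"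
      by (simp_all add: GL_inv_carrier_mat GL_r_inv)
    then show ?case
      using gen_grp.mult_inv[OF gen_grp.one[of N S] inv] by simp
  next
    case (eng A B)
    then show ?case using gen_grp_mult_closed[OF S'] by simp
  qed
qed

lemma gen_grp_eq_generate: "S \<subseteq> carrier (GL N) \<Longrightarrow> gen_grp N S = generate (GL N) S"
  by (intro equalityI gen_grp_subset_generate generate_subset_gen_grp)

lemma conjugates_GL_eq:
  assumes G: "G \<subseteq> carrier (GL N)"
  shows "{g * h * g' | g h g'. g \<in> G \<and> h \<in> H \<and> g' \<in> carrier_mat N N \<and> g * g' = 1\<^sub>m N}
    = {g \<otimes>\<^bsub>GL N\<^esub> h \<otimes>\<^bsub>GL N\<^esub> inv\<^bsub>GL N\<^esub> g | g h. g \<in> G \<and> h \<in> H}"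
    (is "?L = ?R")
proof
  show "?L \<subseteq> ?R"
  proof
    fix c assume "c \<in> ?L"
    then obtain g h g' where c: "c = g * h * g'" and g: "g \<in> G" and h: "h \<in> H"
      and g': "g' \<in> carrier_mat N N" "g * g' = 1\<^sub>m N"
      by blast
    have "inv\<^bsub>GL N\<^esub> g = g'"
      using g G g' by (intro GL_inv_eq) auto
    then have "c = g \<otimes>\<^bsub>GL N\<^esub> h \<otimes>\<^bsub>GL N\<^esub> inv\<^bsub>GL N\<^esub> g"
      using c by simp
    with g h show "c \<in> ?R" by blast
  qed
  show "?R \<subseteq> ?L"
  proof
    fix c assume "c \<in> ?R"
    then obtain g h where c: "c = g \<otimes>\<^bsub>GL N\<^esub> h \<otimes>\<^bsub>GL N\<^esub> inv\<^bsub>GL N\<^esub> g"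
      and g: "g \<in> G" and h: "h \<in> H"
      by blast
    have "inv\<^bsub>GL N\<^esub> g \<in> carrier_mat N N" "g * inv\<^bsub>GL N\<^esub> g = 1\<^sub>m N"
      using g G by (auto simp: GL_inv_carrier_mat GL_r_inv)
    moreover have "c = g * h * inv\<^bsub>GL N\<^esub> g"
      using c by simp
    ultimately show "c \<in> ?L" using g h by blast
  qed
qed

lemma normal_closure_eq_conj_closure:
  assumes G: "G \<subseteq> carrier (GL N)" and H: "H \<subseteq> carrier (GL N)"
  shows "normal_closure N G H = group.conj_closure (GL N) G H"
proof -
  interpret GL: group "GL N" by (rule group_GL)
  have "{g \<otimes>\<^bsub>GL N\<^esub> h \<otimes>\<^bsub>GL N\<^esub> inv\<^bsub>GL N\<^esub> g | g h. g \<in> G \<and> h \<in> H}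
      \<subseteq> carrier (GL N)"
  proof
    fix c assume "c \<in> {g \<otimes>\<^bsub>GL N\<^esub> h \<otimes>\<^bsub>GL N\<^esub> inv\<^bsub>GL N\<^esub> g | g h. g \<in> G \<and> h \<in> H}"
    then obtain g h where "c = g \<otimes>\<^bsub>GL N\<^esub> h \<otimes>\<^bsub>GL N\<^esub> inv\<^bsub>GL N\<^esub> g" "g \<in> G" "h \<in> H"
      by blast
    then show "c \<in> carrier (GL N)"
      using G H by (simp only:) (intro GL.m_closed GL.inv_closed; blast)
  qed
  then show ?thesis
    unfolding normal_closure_def conjugates_GL_eq[OF G] GL.conj_closure_def
    by (rule gen_grp_eq_generate)
qed

section \<open>Elementary orthogonal generators\<close>

lemma mat_eq_by_mult_vec:
  fixes A B :: "'a::comm_ring_1 mat"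
  assumes A: "A \<in> carrier_mat N N" and B: "B \<in> carrier_mat N N"
    and AB: "\<And>v. v \<in> carrier_vec N \<Longrightarrow> A *\<^sub>v v = B *\<^sub>v v"
  shows "A = B"
proof (rule eq_matI)
  fix i j assume i: "i < dim_row B" and j: "j < dim_col B"
  have "A $$ (i,j) = (A *\<^sub>v unit_vec N j) $ i" using A B i j by simp
  also have "\<dots> = (B *\<^sub>v unit_vec N j) $ i" by (simp add: AB)
  also have "\<dots> = B $$ (i,j)" using B i j by simp
  finally show "A $$ (i,j) = B $$ (i,j)" .
qed (use A B in auto)

lemma mult_mat_vec_assoc4:
  fixes A B C D :: "'a::comm_ring_1 mat"
  assumes "A \<in> carrier_mat N N" "B \<in> carrier_mat N N" "C \<in> carrier_mat N N"
    and "D \<in> carrier_mat N N" "v \<in> carrier_vec N"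
  shows "(A * B * C * D) *\<^sub>v v = A *\<^sub>v (B *\<^sub>v (C *\<^sub>v (D *\<^sub>v v)))"
proof -
  have "A * B \<in> carrier_mat N N" "A * B * C \<in> carrier_mat N N"
    using assms by auto
  then show ?thesis
    using assms by (simp add: assoc_mult_mat_vec[of _ N N _ N])
qed

lemma sigma_perm_ge1: "1 \<le> k \<Longrightarrow> 1 \<le> sigma_perm k"
  by (auto simp: sigma_perm_def)

lemma sigma_perm_le: "even N \<Longrightarrow> k \<le> N \<Longrightarrow> sigma_perm k \<le> N"
  unfolding sigma_perm_def by (cases "k = N") auto

lemma sigma_perm_sigma_perm: "1 \<le> k \<Longrightarrow> sigma_perm (sigma_perm k) = k"
  by (auto simp: sigma_perm_def)

lemma sigma_perm_neq: "1 \<le> k \<Longrightarrow> sigma_perm k \<noteq> k"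
  by (auto simp: sigma_perm_def)

lemma oe_indices_distinct:
  assumes N: "even N" and i: "i \<in> {1..N}" and j: "j \<in> {1..N}"
    and ij: "i \<noteq> j" "i \<noteq> sigma_perm j"
  shows "distinct [i - 1, sigma_perm i - 1, j - 1, sigma_perm j - 1]"
proof -
  have ss: "sigma_perm (sigma_perm i) = i" "sigma_perm (sigma_perm j) = j"
    using i j sigma_perm_sigma_perm by auto
  have "sigma_perm i \<noteq> j" "sigma_perm i \<noteq> sigma_perm j"
    using ij ss by metis+
  moreover have "sigma_perm i \<noteq> i" "sigma_perm j \<noteq> j"
    using i j sigma_perm_neq by auto
  ultimately have "distinct [i, sigma_perm i, j, sigma_perm j]"
    using ij by auto
  moreover have "inj_on (\<lambda>x. x - 1) (set [i, sigma_perm i, j, sigma_perm j])"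
  proof (rule inj_on_subset[of _ "{1..}"])
    show "set [i, sigma_perm i, j, sigma_perm j] \<subseteq> {1..}"
      using i j sigma_perm_ge1[of i] sigma_perm_ge1[of j] by auto
  qed (auto simp: inj_on_def)
  ultimately have "distinct (map (\<lambda>x. x - 1) [i, sigma_perm i, j, sigma_perm j])"
    by (simp only: distinct_map)
  then show ?thesis by simp
qed

lemma oe_carrier [simp]: "oe N i j z \<in> carrier_mat N N"
  unfolding oe_def matunit_def by (intro minus_carrier_mat add_carrier_mat smult_carrier_mat) auto

lemma oe_dim [simp]: "dim_row (oe N i j z) = N" "dim_col (oe N i j z) = N"
  using carrier_matD[OF oe_carrier] by auto

lemma oe_mult_vec_carrier [simp]: "oe N i j z *\<^sub>v v \<in> carrier_vec N"
  by (rule carrier_vecI) simp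

lemma oe_index:
  "a < N \<Longrightarrow> b < N \<Longrightarrow> oe N i j z $$ (a,b) = (if a = b then 1 else 0)
     + z * (if a = i - 1 \<and> b = j - 1 then 1 else 0)
     - z * (if a = sigma_perm j - 1 \<and> b = sigma_perm i - 1 then 1 else 0)"
  by (simp add: oe_def matunit_def)

lemma oe_zero: "oe N i j 0 = 1\<^sub>m N"
  by (rule eq_matI) (simp_all add: oe_index)

lemma oe_flip:
  assumes "1 \<le> i" "1 \<le> j"
  shows "oe N i j z = oe N (sigma_perm j) (sigma_perm i) (- z)"
  by (rule eq_matI) (use assms in \<open>auto simp: oe_index sigma_perm_sigma_perm\<close>)

lemma oe_mult_vec_index:
  fixes v :: "'a::comm_ring_1 vec"
  assumes v: "v \<in> carrier_vec N" and a: "a < N" and "j \<le> N" "sigma_perm i \<le> N"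
  shows "(oe N i j z *\<^sub>v v) $ a = v $ a + (if a = i - 1 then z * v $ (j - 1) else 0)
           - (if a = sigma_perm j - 1 then z * v $ (sigma_perm i - 1) else 0)"
proof -
  have "(oe N i j z *\<^sub>v v) $ a = (\<Sum>b<N. oe N i j z $$ (a,b) * v $ b)"
    using a v by (simp add: scalar_prod_def lessThan_atLeast0)
  also have "\<dots> = (\<Sum>b<N. (if b = a then 1 else 0) * v $ b
      + (if a = i - 1 then z * ((if b = j - 1 then 1 else 0) * v $ b) else 0)
      - (if a = sigma_perm j - 1
         then z * ((if b = sigma_perm i - 1 then 1 else 0) * v $ b) else 0))"
    by (rule sum.cong) (auto simp: oe_index a algebra_simps)
  also have "\<dots> = v $ a + (if a = i - 1 then z * v $ (j - 1) else 0)
        - (if a = sigma_perm j - 1 then z * v $ (sigma_perm i - 1) else 0)"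
    using assms by (simp add: sum.distrib sum_subtractf if_distrib[where f="\<lambda>x. sum x _"]
        sum_distrib_left[symmetric] if_distrib[where f="\<lambda>x. x * _"] cong: if_cong)
  finally show ?thesis .
qed

lemma oe_add:
  fixes z w :: "'a::comm_ring_1"
  assumes N: "even N" and ij: "i \<in> {1..N}" "j \<in> {1..N}" "i \<noteq> j" "i \<noteq> sigma_perm j"
  shows "oe N i j z * oe N i j w = oe N i j (z + w)"
proof (rule mat_eq_by_mult_vec[of _ N])
  fix v :: "'a vec" assume v: "v \<in> carrier_vec N"
  have bounds: "j \<le> N" "sigma_perm i \<le> N" "i - 1 < N" "j - 1 < N"
    "sigma_perm i - 1 < N" "sigma_perm j - 1 < N"
    using ij sigma_perm_le[OF N, of i] sigma_perm_le[OF N, of j] by auto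
  note act = oe_mult_vec_index[OF _ _ bounds(1,2)]
  have d: "distinct [i - 1, sigma_perm i - 1, j - 1, sigma_perm j - 1]"
    by (rule oe_indices_distinct[OF N ij])
  show "(oe N i j z * oe N i j w) *\<^sub>v v = oe N i j (z + w) *\<^sub>v v"
  proof (rule eq_vecI)
    fix a assume "a < dim_vec (oe N i j (z + w) *\<^sub>v v)"
    then show "((oe N i j z * oe N i j w) *\<^sub>v v) $ a = (oe N i j (z + w) *\<^sub>v v) $ a"
      using v d bounds
      by (auto simp: assoc_mult_mat_vec[of _ N N _ N] act algebra_simps
          simp del: index_mult_mat_vec)
  qed simp
qed auto

lemma oe_commutator:
  fixes z w :: "'a::comm_ring_1"
  assumes N: "even N" and ijk: "i \<in> {1..N}" "j \<in> {1..N}" "k \<in> {1..N}"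
    and ij: "i \<noteq> j" "i \<noteq> sigma_perm j"
    and k: "k \<noteq> i" "k \<noteq> sigma_perm i" "k \<noteq> j" "k \<noteq> sigma_perm j"
  shows "oe N i j (z * w) = oe N i k z * oe N k j w * oe N i k (- z) * oe N k j (- w)"
proof (rule mat_eq_by_mult_vec[of _ N])
  fix v :: "'a vec" assume v: "v \<in> carrier_vec N"
  define p q l P Q L where "p = i - 1" "q = j - 1" "l = k - 1"
    "P = sigma_perm i - 1" "Q = sigma_perm j - 1" "L = sigma_perm k - 1"
  have "i \<noteq> sigma_perm k"
    using ijk k sigma_perm_sigma_perm by (metis atLeastAtMost_iff)
  then have "distinct [p, P, l, L]"
    unfolding p_q_l_P_Q_L_def using ijk k by (intro oe_indices_distinct[OF N]) auto
  moreover have "distinct [p, P, q, Q]" "distinct [l, L, q, Q]"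
    unfolding p_q_l_P_Q_L_def using ijk ij k by (intro oe_indices_distinct[OF N]; simp)+
  ultimately have d: "distinct [p, P, q, Q, l, L]"
    by auto
  have bounds: "j \<le> N" "k \<le> N" "sigma_perm i \<le> N" "sigma_perm k \<le> N"
    "p < N" "q < N" "l < N" "P < N" "Q < N" "L < N"
    using ijk sigma_perm_le[OF N, of i] sigma_perm_le[OF N, of j] sigma_perm_le[OF N, of k]
    unfolding p_q_l_P_Q_L_def by auto
  have act_ij: "(oe N i j c *\<^sub>v u) $ a
      = u $ a + (if a = p then c * u $ q else 0) - (if a = Q then c * u $ P else 0)"
   and act_ik: "(oe N i k c *\<^sub>v u) $ a
      = u $ a + (if a = p then c * u $ l else 0) - (if a = L then c * u $ P else 0)"
   and act_kj: "(oe N k j c *\<^sub>v u) $ a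
      = u $ a + (if a = l then c * u $ q else 0) - (if a = Q then c * u $ L else 0)"
    if "u \<in> carrier_vec N" "a < N" for c :: 'a and u a
    using oe_mult_vec_index[OF that bounds(1,3)] oe_mult_vec_index[OF that bounds(2,3)]
      oe_mult_vec_index[OF that bounds(1,4)]
    unfolding p_q_l_P_Q_L_def by simp_all
  show "oe N i j (z * w) *\<^sub>v v
      = (oe N i k z * oe N k j w * oe N i k (- z) * oe N k j (- w)) *\<^sub>v v"
  proof (rule eq_vecI)
    fix a assume "a < dim_vec ((oe N i k z * oe N k j w * oe N i k (- z) * oe N k j (- w)) *\<^sub>v v)"
    then show "(oe N i j (z * w) *\<^sub>v v) $ a
      = ((oe N i k z * oe N k j w * oe N i k (- z) * oe N k j (- w)) *\<^sub>v v) $ a"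
      using v d distinct_rev[THEN iffD2, OF d] bounds
      by (simp add: mult_mat_vec_assoc4[OF oe_carrier oe_carrier oe_carrier oe_carrier v]
          act_ij act_ik act_kj algebra_simps del: index_mult_mat_vec)
  qed simp
qed auto

lemma oe_mem_GL:
  assumes "even N" "i \<in> {1..N}" "j \<in> {1..N}" "i \<noteq> j" "i \<noteq> sigma_perm j"
  shows "oe N i j z \<in> carrier (GL N)"
proof -
  have "oe N i j z * oe N i j (- z) = 1\<^sub>m N" "oe N i j (- z) * oe N i j z = 1\<^sub>m N"
    by (simp_all add: oe_add[OF assms] oe_zero)
  then show ?thesis
    unfolding mem_GL_iff by (intro conjI bexI[OF _ oe_carrier] oe_carrier)
qed

lemma oe_gens_subset_GL: "even N \<Longrightarrow> oe_gens N J \<subseteq> carrier (GL N)"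
  unfolding oe_gens_def using oe_mem_GL by blast

lemma EO_mat_eq_generate: "even N \<Longrightarrow> EO_mat N J = generate (GL N) (oe_gens N J)"
  unfolding EO_mat_def by (intro gen_grp_eq_generate oe_gens_subset_GL)

lemma EO_mat_subgroup: "even N \<Longrightarrow> subgroup (EO_mat N J) (GL N)"
  unfolding EO_mat_eq_generate[of N J]
  by (intro group.generate_is_subgroup group_GL oe_gens_subset_GL)

lemma EO_mat_rel_eq:
  "even N \<Longrightarrow> EO_mat_rel N I = group.conj_closure (GL N) (EO_mat N UNIV) (EO_mat N I)"
  unfolding EO_mat_rel_def
  by (intro normal_closure_eq_conj_closure subgroup.subset EO_mat_subgroup)

section \<open>DSER transformations as matrices\<close>

text \<open>The \<open>0\<close>-based counterpart of \<^const>\<open>sigma_perm\<close>, matching the indices of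
  vectors and matrices.\<close>

definition sigma0 :: "nat \<Rightarrow> nat" where
  "sigma0 k = (if even k then k + 1 else k - 1)"

lemma sigma_perm_Suc: "sigma_perm (Suc k) = Suc (sigma0 k)"
  by (simp add: sigma_perm_def sigma0_def)

lemma sigma0_sigma0 [simp]: "sigma0 (sigma0 k) = k"
  by (auto simp: sigma0_def)

lemma sigma0_neq [simp]: "sigma0 k \<noteq> k"
  by (auto simp: sigma0_def elim: oddE)

lemma sigma0_eq_iff [simp]: "sigma0 i = sigma0 j \<longleftrightarrow> i = j"
  by (metis sigma0_sigma0)

lemma sigma0_less [simp]: "k < 2 * r \<Longrightarrow> sigma0 k < 2 * r"
  by (auto simp: sigma0_def)

lemma sum_sigma0: "(\<Sum>i<2*r. f (sigma0 i)) = (\<Sum>i<2*r. f i)"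
  by (rule sum.reindex_bij_witness[of _ sigma0 sigma0]) auto

lemma psi_tilde_mult_vec:
  fixes z :: "'a::comm_ring_1 vec"
  assumes "z \<in> carrier_vec (2*r)"
  shows "psi_tilde r *\<^sub>v z = vec (2*r) (\<lambda>i. z $ sigma0 i)"
proof (rule eq_vecI)
  fix i assume "i < dim_vec (vec (2*r) (\<lambda>i. z $ sigma0 i))"
  then have i: "i < 2*r" by simp
  have "(psi_tilde r *\<^sub>v z) $ i = (\<Sum>j<2*r. (if j = sigma0 i then 1 else 0) * z $ j)"
    using i assms by (auto simp: psi_tilde_def scalar_prod_def lessThan_atLeast0 sigma0_def
        intro!: sum.cong elim: oddE)
  also have "\<dots> = z $ sigma0 i"
    using i by (simp add: if_distrib[where f="\<lambda>x. x * _"] cong: if_cong)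
  finally show "(psi_tilde r *\<^sub>v z) $ i = vec (2*r) (\<lambda>i. z $ sigma0 i) $ i"
    using i by simp
qed (simp add: psi_tilde_def)

lemma bilQ_eq:
  fixes w z :: "'a::comm_ring_1 vec"
  assumes "w \<in> carrier_vec (2*r)" "z \<in> carrier_vec (2*r)"
  shows "bilQ r w z = (\<Sum>i<2*r. w $ i * z $ sigma0 i)"
  using assms by (simp add: bilQ_def psi_tilde_mult_vec scalar_prod_def lessThan_atLeast0)

lemma bilQ_sym:
  fixes w z :: "'a::comm_ring_1 vec"
  assumes "w \<in> carrier_vec (2*r)" "z \<in> carrier_vec (2*r)"
  shows "bilQ r w z = bilQ r z w"
  using assms sum_sigma0[of "\<lambda>i. z $ i * w $ sigma0 i" r]
  by (simp add: bilQ_eq mult.commute)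

lemma bilQ_add_self:
  fixes a b :: "'a::comm_ring_1 vec"
  assumes a: "a \<in> carrier_vec (2*r)" and b: "b \<in> carrier_vec (2*r)"
  shows "bilQ r (a + b) (a + b) = bilQ r a a + bilQ r b b + 2 * bilQ r a b"
proof -
  have "bilQ r (a + b) (a + b) = (\<Sum>i<2*r. a $ i * a $ sigma0 i + b $ i * b $ sigma0 i
      + a $ i * b $ sigma0 i + b $ i * a $ sigma0 i)"
    using a b by (auto simp: bilQ_eq ring_distribs intro!: sum.cong)
  also have "\<dots> = bilQ r a a + bilQ r b b + bilQ r a b + bilQ r b a"
    using a b by (simp add: bilQ_eq sum.distrib)
  finally show ?thesis
    using bilQ_sym[OF b a] by simp
qed

lemma bilQ_unit_vec_self:
  "bilQ r (z \<cdot>\<^sub>v unit_vec (2*r) k) (z \<cdot>\<^sub>v unit_vec (2*r) k) = (0::'a::comm_ring_1)"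
  by (simp add: bilQ_eq unit_vec_def sum.neutral)

lemma adjQ_eq:
  fixes a :: "'a::comm_ring_1 vec"
  assumes a: "a \<in> carrier_vec (2*r)"
  shows "adjQ r a c = vec (2*r) (\<lambda>i. c * a $ sigma0 i)"
  unfolding adjQ_def
proof (rule the_equality)
  let ?w = "vec (2*r) (\<lambda>i. c * a $ sigma0 i)"
  have "bilQ r ?w z = c * (a \<bullet> z)" if z: "z \<in> carrier_vec (2*r)" for z
  proof -
    have "bilQ r ?w z = (\<Sum>i<2*r. c * (a $ sigma0 i * z $ sigma0 i))"
      using z by (simp add: bilQ_eq mult.assoc)
    also have "\<dots> = (\<Sum>i<2*r. c * (a $ i * z $ i))"
      by (rule sum_sigma0)
    also have "\<dots> = c * (a \<bullet> z)"
      using z a by (simp add: scalar_prod_def lessThan_atLeast0 sum_distrib_left)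
    finally show ?thesis .
  qed
  then show "?w \<in> carrier_vec (2*r) \<and> (\<forall>z\<in>carrier_vec (2*r). bilQ r ?w z = c * (a \<bullet> z))"
    by simp
next
  fix w assume w: "w \<in> carrier_vec (2*r) \<and> (\<forall>z\<in>carrier_vec (2*r). bilQ r w z = c * (a \<bullet> z))"
  show "w = vec (2*r) (\<lambda>i. c * a $ sigma0 i)"
  proof (rule eq_vecI)
    fix k assume "k < dim_vec (vec (2*r) (\<lambda>i. c * a $ sigma0 i))"
    then have k: "k < 2*r" by simp
    have "w $ k = bilQ r w (unit_vec (2*r) (sigma0 k))"
      using w k by (simp add: bilQ_eq if_distrib[where f="\<lambda>x. _ * x"] cong: if_cong)
    also have "\<dots> = c * a $ sigma0 k"
      using w k a by simp
    finally show "w $ k = vec (2*r) (\<lambda>i. c * a $ sigma0 i) $ k"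
      using k by simp
  qed (use w in simp)
qed

lemma adjQ_index: "a \<in> carrier_vec (2*r) \<Longrightarrow> i < 2*r \<Longrightarrow> adjQ r a c $ i = c * a $ sigma0 i"
  by (simp add: adjQ_eq)

lemma adjQ_dim: "a \<in> carrier_vec (2*r) \<Longrightarrow> dim_vec (adjQ r a c) = 2*r"
  by (simp add: adjQ_eq)

lemma scalar_prod_adjQ:
  fixes a :: "'a::comm_ring_1 vec"
  assumes "a \<in> carrier_vec (2*r)"
  shows "a \<bullet> adjQ r a c = c * bilQ r a a"
  using assms by (simp add: adjQ_eq bilQ_eq scalar_prod_def lessThan_atLeast0 sum_distrib_left
      algebra_simps)

lemma scalar_prod_vec_first_unit:
  fixes a :: "'a::comm_ring_1 vec"
  assumes "a \<in> carrier_vec n" "n \<le> N"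
  shows "a \<bullet> vec_first (unit_vec N j) n = (if j < n then a $ j else 0)"
  using assms by (auto simp: scalar_prod_def lessThan_atLeast0 vec_first_def unit_vec_def
      if_distrib[where f="\<lambda>x. _ * x"] cong: if_cong)

lemma vec_first_unit_vec_index:
  "i < n \<Longrightarrow> n \<le> N \<Longrightarrow> vec_first (unit_vec N j) n $ i = (if i = j then 1 else 0)"
  by (simp add: vec_first_def unit_vec_def)

definition alpha_mat :: "nat \<Rightarrow> 'a::comm_ring_1 vec \<Rightarrow> 'a mat" where
  "alpha_mat r a = mat (2*r+2) (2*r+2) (\<lambda>(i,j).
     if i < 2*r then (if j = i then 1 else if j = 2*r+1 then - a $ sigma0 i else 0)
     else if i = 2*r then
       (if j < 2*r then a $ j else if j = 2*r then 1 else - half * bilQ r a a)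
     else if j = 2*r+1 then 1 else 0)"

definition beta_mat :: "nat \<Rightarrow> 'a::comm_ring_1 vec \<Rightarrow> 'a mat" where
  "beta_mat r b = mat (2*r+2) (2*r+2) (\<lambda>(i,j).
     if i < 2*r then (if j = i then 1 else if j = 2*r then - b $ sigma0 i else 0)
     else if i = 2*r then (if j = 2*r then 1 else 0)
     else if j < 2*r then b $ j else if j = 2*r then - half * bilQ r b b else 1)"

text \<open>For \<open>\<alpha> z = a \<bullet> z\<close> the corner entry \<open>- half * bilQ r a a\<close> of
  \<^const>\<open>alpha_mat\<close> is \<open>-\<alpha>\<alpha>\<^sup>*(1)/2\<close>; \<^const>\<open>beta_mat\<close> is the same
  with the roles of \<open>x\<close> and \<open>f\<close> exchanged.\<close>

lemma alpha_mat_carrier [simp]: "alpha_mat r a \<in> carrier_mat (2*r+2) (2*r+2)"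
  by (simp add: alpha_mat_def)

lemma beta_mat_carrier [simp]: "beta_mat r b \<in> carrier_mat (2*r+2) (2*r+2)"
  by (simp add: beta_mat_def)

lemma mat_of_map_E_alpha:
  fixes a :: "'a::comm_ring_1 vec"
  assumes a: "a \<in> carrier_vec (2*r)"
  shows "mat_of_map (2*r+2) (E_alpha r a) = alpha_mat r a"
  by (rule eq_matI) (use a in \<open>auto simp: mat_of_map_def E_alpha_def Let_def alpha_mat_def
      scalar_prod_vec_first_unit scalar_prod_adjQ adjQ_index adjQ_dim vec_first_unit_vec_index\<close>)

lemma mat_of_map_E_beta:
  fixes b :: "'a::comm_ring_1 vec"
  assumes b: "b \<in> carrier_vec (2*r)"
  shows "mat_of_map (2*r+2) (E_beta r b) = beta_mat r b"
  by (rule eq_matI) (use b in \<open>auto simp: mat_of_map_def E_beta_def Let_def beta_mat_def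
      scalar_prod_vec_first_unit scalar_prod_adjQ adjQ_index adjQ_dim vec_first_unit_vec_index\<close>)

lemma two_mult_half: "\<exists>h::'a::comm_ring_1. 2 * h = 1 \<Longrightarrow> 2 * (half::'a) = 1"
  unfolding half_def by (rule someI_ex)

lemma alpha_mat_mult:
  fixes a b :: "'a::comm_ring_1 vec"
  assumes half: "2 * (half::'a) = 1" and a: "a \<in> carrier_vec (2*r)" and b: "b \<in> carrier_vec (2*r)"
  shows "alpha_mat r a * alpha_mat r b = alpha_mat r (a + b)"
proof (rule eq_matI)
  fix i j assume i: "i < dim_row (alpha_mat r (a + b))" and j: "j < dim_col (alpha_mat r (a + b))"
  have half_twice: "half * (2 * x) = x" for x :: 'a
    using half by (metis mult.assoc mult.commute mult_1)
  have "(alpha_mat r a * alpha_mat r b) $$ (i,j)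
      = (\<Sum>k<2*r+2. alpha_mat r a $$ (i,k) * alpha_mat r b $$ (k,j))"
    using i j by (simp add: alpha_mat_def scalar_prod_def lessThan_atLeast0)
  also have "\<dots> = alpha_mat r (a + b) $$ (i,j)"
    using i j a b
    by (simp add: alpha_mat_def bilQ_add_self bilQ_eq[symmetric] distrib_left half_twice sum_negf
        if_distrib[where f="\<lambda>x. x * _"] if_distrib[where f="\<lambda>x. _ * x"] cong: if_cong)
  finally show "(alpha_mat r a * alpha_mat r b) $$ (i,j) = alpha_mat r (a + b) $$ (i,j)" .
qed (simp_all add: alpha_mat_def)

lemma beta_mat_mult:
  fixes a b :: "'a::comm_ring_1 vec"
  assumes half: "2 * (half::'a) = 1" and a: "a \<in> carrier_vec (2*r)" and b: "b \<in> carrier_vec (2*r)"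
  shows "beta_mat r a * beta_mat r b = beta_mat r (a + b)"
proof (rule eq_matI)
  fix i j assume i: "i < dim_row (beta_mat r (a + b))" and j: "j < dim_col (beta_mat r (a + b))"
  have half_twice: "half * (2 * x) = x" for x :: 'a
    using half by (metis mult.assoc mult.commute mult_1)
  have "(beta_mat r a * beta_mat r b) $$ (i,j)
      = (\<Sum>k<2*r+2. beta_mat r a $$ (i,k) * beta_mat r b $$ (k,j))"
    using i j by (simp add: beta_mat_def scalar_prod_def lessThan_atLeast0)
  also have "\<dots> = beta_mat r (a + b) $$ (i,j)"
    using i j a b
    by (simp add: beta_mat_def bilQ_add_self bilQ_eq[symmetric] distrib_left half_twice sum_negf
        if_distrib[where f="\<lambda>x. x * _"] if_distrib[where f="\<lambda>x. _ * x"] cong: if_cong)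
  finally show "(beta_mat r a * beta_mat r b) $$ (i,j) = beta_mat r (a + b) $$ (i,j)" .
qed (simp_all add: beta_mat_def)

lemma alpha_mat_zero: "alpha_mat r (0\<^sub>v (2*r)) = (1\<^sub>m (2*r+2) :: 'a::comm_ring_1 mat)"
  by (rule eq_matI) (auto simp: alpha_mat_def bilQ_eq)

lemma beta_mat_zero: "beta_mat r (0\<^sub>v (2*r)) = (1\<^sub>m (2*r+2) :: 'a::comm_ring_1 mat)"
  by (rule eq_matI) (auto simp: beta_mat_def bilQ_eq)

lemma alpha_mat_unit:
  fixes z :: "'a::comm_ring_1"
  assumes k: "k < 2*r"
  shows "alpha_mat r (z \<cdot>\<^sub>v unit_vec (2*r) k) = oe (2*r+2) (2*r+1) (Suc k) z"
proof (rule eq_matI)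
  fix a b assume a: "a < dim_row (oe (2*r+2) (2*r+1) (Suc k) z)"
    and b: "b < dim_col (oe (2*r+2) (2*r+1) (Suc k) z)"
  have "sigma_perm (2*r+1) - 1 = 2*r+1" "sigma_perm (Suc k) - 1 = sigma0 k"
    by (simp_all add: sigma_perm_def sigma0_def)
  then have "oe (2*r+2) (2*r+1) (Suc k) z $$ (a,b) = (if a = b then 1 else 0)
      + z * (if a = 2*r \<and> b = k then 1 else 0)
      - z * (if a = sigma0 k \<and> b = 2*r+1 then 1 else 0)"
    using a b by (simp add: oe_index)
  moreover have "sigma0 k \<noteq> 2*r" "sigma0 k \<noteq> 2*r+1"
    using sigma0_less[OF k] by simp_all
  ultimately show "alpha_mat r (z \<cdot>\<^sub>v unit_vec (2*r) k) $$ (a,b)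
      = oe (2*r+2) (2*r+1) (Suc k) z $$ (a,b)"
    using a b k by (auto simp: alpha_mat_def bilQ_unit_vec_self)
qed (simp_all add: alpha_mat_def)

lemma beta_mat_unit:
  fixes z :: "'a::comm_ring_1"
  assumes k: "k < 2*r"
  shows "beta_mat r (z \<cdot>\<^sub>v unit_vec (2*r) k) = oe (2*r+2) (2*r+2) (Suc k) z"
proof (rule eq_matI)
  fix a b assume a: "a < dim_row (oe (2*r+2) (2*r+2) (Suc k) z)"
    and b: "b < dim_col (oe (2*r+2) (2*r+2) (Suc k) z)"
  have "sigma_perm (2*r+2) - 1 = 2*r" "sigma_perm (Suc k) - 1 = sigma0 k"
    by (simp_all add: sigma_perm_def sigma0_def)
  then have "oe (2*r+2) (2*r+2) (Suc k) z $$ (a,b) = (if a = b then 1 else 0)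
      + z * (if a = 2*r+1 \<and> b = k then 1 else 0)
      - z * (if a = sigma0 k \<and> b = 2*r then 1 else 0)"
    using a b by (simp add: oe_index)
  moreover have "sigma0 k \<noteq> 2*r" "sigma0 k \<noteq> 2*r+1"
    using sigma0_less[OF k] by simp_all
  ultimately show "beta_mat r (z \<cdot>\<^sub>v unit_vec (2*r) k) $$ (a,b)
      = oe (2*r+2) (2*r+2) (Suc k) z $$ (a,b)"
    using a b k by (auto simp: beta_mat_def bilQ_unit_vec_self)
qed (simp_all add: beta_mat_def)

lemma alpha_mat_mem_GL:
  assumes half: "2 * (half::'a::comm_ring_1) = 1" and a: "(a::'a vec) \<in> carrier_vec (2*r)"
  shows "alpha_mat r a \<in> carrier (GL (2*r+2))"
proof -
  have "alpha_mat r a * alpha_mat r (- a) = 1\<^sub>m (2*r+2)"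
    "alpha_mat r (- a) * alpha_mat r a = 1\<^sub>m (2*r+2)"
    using a by (simp_all add: alpha_mat_mult[OF half] alpha_mat_zero)
  then show ?thesis
    unfolding mem_GL_iff by (intro conjI bexI[OF _ alpha_mat_carrier] alpha_mat_carrier)
qed

lemma beta_mat_mem_GL:
  assumes half: "2 * (half::'a::comm_ring_1) = 1" and b: "(b::'a vec) \<in> carrier_vec (2*r)"
  shows "beta_mat r b \<in> carrier (GL (2*r+2))"
proof -
  have "beta_mat r b * beta_mat r (- b) = 1\<^sub>m (2*r+2)"
    "beta_mat r (- b) * beta_mat r b = 1\<^sub>m (2*r+2)"
    using b by (simp_all add: beta_mat_mult[OF half] beta_mat_zero)
  then show ?thesis
    unfolding mem_GL_iff by (intro conjI bexI[OF _ beta_mat_carrier] beta_mat_carrier)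
qed

lemma is_ideal_UNIV: "is_ideal (UNIV :: 'a::comm_ring_1 set)"
  by (simp add: is_ideal_def)

lemma ideal_uminus: "is_ideal J \<Longrightarrow> z \<in> J \<Longrightarrow> - z \<in> J"
  unfolding is_ideal_def by (metis mult_minus1)

lemma ideal_sum:
  assumes J: "is_ideal J" and f: "\<And>i. i \<in> A \<Longrightarrow> f i \<in> J"
  shows "sum f A \<in> J"
  using f
proof (induction A rule: infinite_finite_induct)
  case (insert x F)
  then show ?case using J by (simp add: is_ideal_def)
qed (use J in \<open>simp_all add: is_ideal_def\<close>)

lemma scalar_prod_mem_ideal_iff:
  fixes a :: "'a::comm_ring_1 vec"
  assumes J: "is_ideal J" and a: "a \<in> carrier_vec n"
  shows "(\<forall>z \<in> carrier_vec n. a \<bullet> z \<in> J) \<longleftrightarrow> set\<^sub>v a \<subseteq> J"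
proof
  assume "\<forall>z \<in> carrier_vec n. a \<bullet> z \<in> J"
  then have "a \<bullet> unit_vec n k \<in> J" if "k < n" for k
    by simp
  then show "set\<^sub>v a \<subseteq> J"
    using a by (auto simp: vec_set_def)
next
  assume aJ: "set\<^sub>v a \<subseteq> J"
  show "\<forall>z \<in> carrier_vec n. a \<bullet> z \<in> J"
  proof
    fix z :: "'a vec" assume z: "z \<in> carrier_vec n"
    have "z $ i * a $ i \<in> J" if "i < n" for i
      using J aJ a that by (auto simp: is_ideal_def vec_set_def)
    then show "a \<bullet> z \<in> J"
      using z by (auto simp: scalar_prod_def mult.commute intro!: ideal_sum[OF J])
  qed
qed

lemma DSER_gens_eq:
  assumes J: "is_ideal J"
  shows "DSER_gens r J = alpha_mat r ` {a \<in> carrier_vec (2*r). set\<^sub>v a \<subseteq> J}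
    \<union> beta_mat r ` {a \<in> carrier_vec (2*r). set\<^sub>v a \<subseteq> J}"
proof -
  have "{a. a \<in> carrier_vec (2*r) \<and> (\<forall>z\<in>carrier_vec (2*r). a \<bullet> z \<in> J)}
      = {a \<in> carrier_vec (2*r). set\<^sub>v a \<subseteq> J}"
    using scalar_prod_mem_ideal_iff[OF J] by blast
  then show ?thesis
    unfolding DSER_gens_def setcompr_eq_image
    by (intro arg_cong2[where f="(\<union>)"] image_cong mat_of_map_E_alpha mat_of_map_E_beta) simp_all
qed

lemma DSER_gens_subset_GL:
  assumes "2 * (half::'a::comm_ring_1) = 1" "is_ideal (J::'a set)"
  shows "DSER_gens r J \<subseteq> carrier (GL (2*r+2))"
  unfolding DSER_gens_eq[OF assms(2)]
  using alpha_mat_mem_GL[OF assms(1)] beta_mat_mem_GL[OF assms(1)] by blast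

lemma EO_DSER_eq_generate:
  "2 * (half::'a::comm_ring_1) = 1 \<Longrightarrow> is_ideal (J::'a set)
    \<Longrightarrow> EO_DSER r J = generate (GL (2*r+2)) (DSER_gens r J)"
  unfolding EO_DSER_def by (intro gen_grp_eq_generate DSER_gens_subset_GL)

lemma EO_DSER_subgroup:
  "2 * (half::'a::comm_ring_1) = 1 \<Longrightarrow> is_ideal (J::'a set)
    \<Longrightarrow> subgroup (EO_DSER r J) (GL (2*r+2))"
  by (simp only: EO_DSER_eq_generate)
    (intro group.generate_is_subgroup group_GL DSER_gens_subset_GL)

lemma EO_DSER_rel_eq:
  "2 * (half::'a::comm_ring_1) = 1 \<Longrightarrow> is_ideal (I::'a set) \<Longrightarrow>
    EO_DSER_rel r I = group.conj_closure (GL (2*r+2)) (EO_DSER r UNIV) (EO_DSER r I)"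
  unfolding EO_DSER_rel_def
  by (intro normal_closure_eq_conj_closure subgroup.subset EO_DSER_subgroup is_ideal_UNIV)

section \<open>Comparing the two generating sets\<close>

lemma DSER_gens_subset_EO_mat:
  assumes half: "2 * (half::'a::comm_ring_1) = 1" and J: "is_ideal (J::'a set)"
  shows "DSER_gens r J \<subseteq> EO_mat (2*r+2) J"
proof -
  interpret GL: group "GL (2*r+2)" by (rule group_GL)
  have EO: "EO_mat (2*r+2) J = generate (GL (2*r+2)) (oe_gens (2*r+2) J)"
    by (rule EO_mat_eq_generate) simp
  have K: "subgroup (EO_mat (2*r+2) J) (GL (2*r+2))"
    by (rule EO_mat_subgroup) simp
  have gen: "oe (2*r+2) i (Suc k) c \<in> EO_mat (2*r+2) J"
    if "i \<in> {2*r+1, 2*r+2}" "k < 2*r" "c \<in> J" for i k c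
  proof -
    have "sigma_perm (Suc k) < 2*r+1" using that(2) by (simp add: sigma_perm_Suc)
    then have "oe (2*r+2) i (Suc k) c \<in> oe_gens (2*r+2) J"
      using that unfolding oe_gens_def
      by (intro CollectI exI[of _ i] exI[of _ "Suc k"] exI[of _ c]) auto
    then show ?thesis
      unfolding EO by (rule generate.incl)
  qed
  have "alpha_mat r a \<in> EO_mat (2*r+2) J" "beta_mat r a \<in> EO_mat (2*r+2) J"
    if a: "a \<in> carrier_vec (2*r)" "set\<^sub>v a \<subseteq> J" for a
  proof -
    have aJ: "a $ k \<in> J" if "k < 2*r" for k
      using a that by (auto simp: vec_set_def)
    show "alpha_mat r a \<in> EO_mat (2*r+2) J"
    proof (rule GL.vec_additive_mem_subgroup[OF K _ _ _ a(1)])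
      fix k assume k: "k < 2*r"
      show "alpha_mat r (a $ k \<cdot>\<^sub>v unit_vec (2*r) k) \<in> EO_mat (2*r+2) J"
        unfolding alpha_mat_unit[OF k] by (rule gen) (simp_all add: k aJ)
    qed (simp_all add: alpha_mat_mult[OF half] alpha_mat_zero)
    show "beta_mat r a \<in> EO_mat (2*r+2) J"
    proof (rule GL.vec_additive_mem_subgroup[OF K _ _ _ a(1)])
      fix k assume k: "k < 2*r"
      show "beta_mat r (a $ k \<cdot>\<^sub>v unit_vec (2*r) k) \<in> EO_mat (2*r+2) J"
        unfolding beta_mat_unit[OF k] by (rule gen) (simp_all add: k aJ)
    qed (simp_all add: beta_mat_mult[OF half] beta_mat_zero)
  qed
  then show ?thesis
    unfolding DSER_gens_eq[OF J] by blast
qed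

lemma EO_DSER_subset_EO_mat:
  assumes "2 * (half::'a::comm_ring_1) = 1" "is_ideal (J::'a set)"
  shows "EO_DSER r J \<subseteq> EO_mat (2*r+2) J"
  unfolding EO_DSER_eq_generate[OF assms]
  by (rule group.generate_subgroup_incl[OF group_GL DSER_gens_subset_EO_mat[OF assms]
        EO_mat_subgroup]) simp

lemma oe_mem_DSER_gens:
  assumes J: "is_ideal J" and z: "z \<in> J"
    and ij: "i \<in> {1..2*r+2}" "j \<in> {1..2*r+2}" "i \<noteq> j" "i \<noteq> sigma_perm j"
    and outside: "2*r < i \<or> 2*r < j"
  shows "oe (2*r+2) i j z \<in> DSER_gens r J"
proof -
  have x_row: "oe (2*r+2) (2*r+1) k c \<in> DSER_gens r J"
    and f_row: "oe (2*r+2) (2*r+2) k c \<in> DSER_gens r J"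
    if k: "k \<in> {1..2*r}" and c: "c \<in> J" for k c
  proof -
    let ?v = "c \<cdot>\<^sub>v unit_vec (2*r) (k - 1)"
    have "set\<^sub>v ?v \<subseteq> J"
      using J c by (auto simp: vec_set_def unit_vec_def is_ideal_def)
    then have "alpha_mat r ?v \<in> DSER_gens r J" "beta_mat r ?v \<in> DSER_gens r J"
      unfolding DSER_gens_eq[OF J] by (auto intro: imageI)
    moreover have "Suc (k - 1) = k" "k - 1 < 2*r" using k by auto
    ultimately show "oe (2*r+2) (2*r+1) k c \<in> DSER_gens r J"
      "oe (2*r+2) (2*r+2) k c \<in> DSER_gens r J"
      using alpha_mat_unit[of "k - 1" r c] beta_mat_unit[of "k - 1" r c] by simp_all
  qed
  have sigma_inner: "sigma_perm k \<in> {1..2*r}" if "k \<in> {1..2*r}" for k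
    using that sigma_perm_ge1 sigma_perm_le[of "2*r"] by auto
  have s: "sigma_perm (2*r+1) = 2*r+2" "sigma_perm (2*r+2) = 2*r+1"
    by (simp_all add: sigma_perm_def)
  consider "i = 2*r+1" "j \<in> {1..2*r}" | "i = 2*r+2" "j \<in> {1..2*r}"
    | "i \<in> {1..2*r}" "j = 2*r+1" | "i \<in> {1..2*r}" "j = 2*r+2"
  proof -
    have "i \<le> 2*r \<or> i = 2*r+1 \<or> i = 2*r+2" "j \<le> 2*r \<or> j = 2*r+1 \<or> j = 2*r+2"
      using ij by auto
    then show thesis
      using that ij outside s by auto
  qed
  then show ?thesis
  proof cases
    case 1
    then show ?thesis using x_row z by simp
  next
    case 2
    then show ?thesis using f_row z by simp
  next
    case 3
    then have "oe (2*r+2) i j z = oe (2*r+2) (2*r+2) (sigma_perm i) (- z)"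
      using oe_flip[of i j "2*r+2" z] s by simp
    then show ?thesis using f_row[OF sigma_inner[OF 3(1)] ideal_uminus[OF J z]] by simp
  next
    case 4
    then have "oe (2*r+2) i j z = oe (2*r+2) (2*r+1) (sigma_perm i) (- z)"
      using oe_flip[of i j "2*r+2" z] s by simp
    then show ?thesis using x_row[OF sigma_inner[OF 4(1)] ideal_uminus[OF J z]] by simp
  qed
qed

lemma oe_eq_mult_conj:
  fixes z :: "'a::comm_ring_1"
  assumes ij: "i \<in> {1..2*r}" "j \<in> {1..2*r}" "i \<noteq> j" "i \<noteq> sigma_perm j"
  defines "A \<equiv> \<lambda>c. oe (2*r+2) i (2*r+1) c" and "B \<equiv> oe (2*r+2) (2*r+1) j (1::'a)"
  shows "oe (2*r+2) i j z = A z \<otimes>\<^bsub>GL (2*r+2)\<^esub>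
    (B \<otimes>\<^bsub>GL (2*r+2)\<^esub> A (- z) \<otimes>\<^bsub>GL (2*r+2)\<^esub> inv\<^bsub>GL (2*r+2)\<^esub> B)"
proof -
  interpret GL: group "GL (2*r+2)" by (rule group_GL)
  have si: "sigma_perm i \<le> 2*r" and sj: "sigma_perm j \<le> 2*r"
    using ij sigma_perm_le[of "2*r"] by simp_all
  have s: "sigma_perm (2*r+1) = 2*r+2" by (simp add: sigma_perm_def)
  have A_GL: "A c \<in> carrier (GL (2*r+2))" for c
    unfolding A_def using ij s by (intro oe_mem_GL) auto
  have B_GL: "B \<in> carrier (GL (2*r+2))"
    unfolding B_def using ij sj by (intro oe_mem_GL) auto
  have "B * oe (2*r+2) (2*r+1) j (- 1) = 1\<^sub>m (2*r+2)"
    unfolding B_def using ij sj by (simp add: oe_add oe_zero)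
  then have B_inv: "inv\<^bsub>GL (2*r+2)\<^esub> B = oe (2*r+2) (2*r+1) j (- 1)"
    by (intro GL_inv_eq[OF B_GL] oe_carrier)
  have "oe (2*r+2) i j z = A z * B * A (- z) * oe (2*r+2) (2*r+1) j (- 1)"
    unfolding A_def B_def using oe_commutator[of "2*r+2" i j "2*r+1" z 1] ij s si sj by simp
  also have "\<dots> = A z \<otimes>\<^bsub>GL (2*r+2)\<^esub> B \<otimes>\<^bsub>GL (2*r+2)\<^esub> A (- z)
      \<otimes>\<^bsub>GL (2*r+2)\<^esub> inv\<^bsub>GL (2*r+2)\<^esub> B"
    unfolding B_inv by simp
  also have "\<dots> = A z \<otimes>\<^bsub>GL (2*r+2)\<^esub>
      (B \<otimes>\<^bsub>GL (2*r+2)\<^esub> A (- z) \<otimes>\<^bsub>GL (2*r+2)\<^esub> inv\<^bsub>GL (2*r+2)\<^esub> B)"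
    using A_GL B_GL by (simp only: GL.m_assoc GL.m_closed GL.inv_closed)
  finally show ?thesis .
qed

lemma oe_mem_conj_closure:
  fixes J :: "'a::comm_ring_1 set"
  assumes half: "2 * (half::'a) = 1" and J: "is_ideal J" and z: "z \<in> J"
    and ij: "i \<in> {1..2*r+2}" "j \<in> {1..2*r+2}" "i \<noteq> j" "i \<noteq> sigma_perm j"
  shows "oe (2*r+2) i j z \<in> group.conj_closure (GL (2*r+2)) (EO_DSER r UNIV) (EO_DSER r J)"
proof -
  interpret GL: group "GL (2*r+2)" by (rule group_GL)
  let ?E = "EO_DSER r (UNIV :: 'a set)" and ?H = "EO_DSER r J"
  have E: "subgroup ?E (GL (2*r+2))" by (rule EO_DSER_subgroup[OF half is_ideal_UNIV])
  have H: "subgroup ?H (GL (2*r+2))" by (rule EO_DSER_subgroup[OF half J])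
  have gens_E: "DSER_gens r UNIV \<subseteq> ?E" and gens_H: "DSER_gens r J \<subseteq> ?H"
    by (auto simp: EO_DSER_eq_generate[OF half] is_ideal_UNIV J intro: generate.incl)
  have H_cc: "?H \<subseteq> GL.conj_closure ?E ?H"
    by (rule GL.subset_conj_closure[OF subgroup.one_closed[OF E] subgroup.subset[OF H]])
  show ?thesis
  proof (cases "2*r < i \<or> 2*r < j")
    case True
    then show ?thesis using oe_mem_DSER_gens[OF J z ij True] gens_H H_cc by blast
  next
    case False
    have s: "sigma_perm (2*r+1) = 2*r+2" by (simp add: sigma_perm_def)
    have "sigma_perm j \<le> 2*r" using False sigma_perm_le[of "2*r"] by simp
    then have B: "oe (2*r+2) (2*r+1) j 1 \<in> ?E"
      using oe_mem_DSER_gens[OF is_ideal_UNIV UNIV_I, where i="2*r+1" and j=j and r=r]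
        False ij gens_E by auto
    have A: "oe (2*r+2) i (2*r+1) c \<in> ?H" if "c \<in> J" for c
      using oe_mem_DSER_gens[OF J that, where i=i and j="2*r+1" and r=r] False ij s gens_H by auto
    have cc: "subgroup (GL.conj_closure ?E ?H) (GL (2*r+2))"
      by (rule GL.conj_closure_subgroup[OF subgroup.subset[OF E] subgroup.subset[OF H]])
    let ?B = "oe (2*r+2) (2*r+1) j (1::'a)"
    have "oe (2*r+2) i j z = oe (2*r+2) i (2*r+1) z \<otimes>\<^bsub>GL (2*r+2)\<^esub>
        (?B \<otimes>\<^bsub>GL (2*r+2)\<^esub> oe (2*r+2) i (2*r+1) (- z)
          \<otimes>\<^bsub>GL (2*r+2)\<^esub> inv\<^bsub>GL (2*r+2)\<^esub> ?B)"
      using False ij by (intro oe_eq_mult_conj) auto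
    also have "\<dots> \<in> GL.conj_closure ?E ?H"
      by (intro subgroup.m_closed[OF cc] GL.conj_mem_conj_closure[OF B A] H_cc[THEN subsetD] A
          ideal_uminus[OF J z] z)
    finally show ?thesis .
  qed
qed

lemma EO_mat_subset_conj_closure:
  assumes half: "2 * (half::'a::comm_ring_1) = 1" and J: "is_ideal (J::'a set)"
  shows "EO_mat (2*r+2) J \<subseteq> group.conj_closure (GL (2*r+2)) (EO_DSER r UNIV) (EO_DSER r J)"
proof -
  interpret GL: group "GL (2*r+2)" by (rule group_GL)
  have "oe_gens (2*r+2) J \<subseteq> GL.conj_closure (EO_DSER r UNIV) (EO_DSER r J)"
    unfolding oe_gens_def using oe_mem_conj_closure[OF half J] by blast
  moreover have "subgroup (GL.conj_closure (EO_DSER r UNIV) (EO_DSER r J)) (GL (2*r+2))"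
    using EO_DSER_subgroup[OF half is_ideal_UNIV] EO_DSER_subgroup[OF half J]
    by (intro GL.conj_closure_subgroup subgroup.subset)
  moreover have "EO_mat (2*r+2) J = generate (GL (2*r+2)) (oe_gens (2*r+2) J)"
    by (rule EO_mat_eq_generate) simp
  ultimately show ?thesis
    using GL.generate_subgroup_incl by metis
qed

lemma EO_mat_UNIV_eq_EO_DSER:
  assumes half: "2 * (half::'a::comm_ring_1) = 1"
  shows "EO_mat (2*r+2) (UNIV :: 'a set) = EO_DSER r UNIV"
proof
  have "subgroup (EO_DSER r (UNIV :: 'a set)) (GL (2*r+2))"
    by (rule EO_DSER_subgroup[OF half is_ideal_UNIV])
  then show "EO_mat (2*r+2) (UNIV :: 'a set) \<subseteq> EO_DSER r UNIV"
    using EO_mat_subset_conj_closure[OF half is_ideal_UNIV, where r=r]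
    by (simp add: group.conj_closure_self[OF group_GL])
  show "EO_DSER r UNIV \<subseteq> EO_mat (2*r+2) (UNIV :: 'a set)"
    by (rule EO_DSER_subset_EO_mat[OF half is_ideal_UNIV])
qed

theorem mainTheorem3:
  fixes I :: "'a::comm_ring_1 set" and r :: nat
  assumes "\<exists>h::'a. 2 * h = 1"
    and "is_ideal I"
    and "r \<ge> 1"
  shows "EO_DSER_rel r I = EO_mat_rel (2*r + 2) I"
proof -
  have half: "2 * (half::'a) = 1" using assms(1) by (rule two_mult_half)
  interpret GL: group "GL (2*r+2)" by (rule group_GL)
  let ?E = "EO_DSER r (UNIV :: 'a set)"
  have E: "subgroup ?E (GL (2*r+2))" by (rule EO_DSER_subgroup[OF half is_ideal_UNIV])
  have H: "subgroup (EO_DSER r I) (GL (2*r+2))" by (rule EO_DSER_subgroup[OF half assms(2)])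
  have K: "subgroup (EO_mat (2*r+2) I) (GL (2*r+2))" by (rule EO_mat_subgroup) simp
  have "EO_DSER_rel r I = GL.conj_closure ?E (EO_DSER r I)"
    by (rule EO_DSER_rel_eq[OF half assms(2)])
  also have "\<dots> = GL.conj_closure ?E (EO_mat (2*r+2) I)"
  proof (rule GL.conj_closure_eqI[OF E subgroup.subset[OF H] subgroup.subset[OF K]])
    show "EO_DSER r I \<subseteq> GL.conj_closure ?E (EO_mat (2*r+2) I)"
      using EO_DSER_subset_EO_mat[OF half assms(2)]
        GL.subset_conj_closure[OF subgroup.one_closed[OF E] subgroup.subset[OF K]] by blast
    show "EO_mat (2*r+2) I \<subseteq> GL.conj_closure ?E (EO_DSER r I)"
      by (rule EO_mat_subset_conj_closure[OF half assms(2)])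
  qed
  also have "\<dots> = EO_mat_rel (2*r + 2) I"
    using EO_mat_rel_eq[of "2*r+2" I] EO_mat_UNIV_eq_EO_DSER[OF half, of r] by simp
  finally show ?thesis .
qed

end
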